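(* Let $S\subset\mathbb{R}^2$ be a finite point set and $I=\{p_1,\dots,p_n\}$ a finite point set disjoint from $S$, with $S\cup I$ in general position. Let $R\subseteq S$ be any subset containing every $q\in S$ such that some $p_i\in I$ conflicts (with respect to $S$) with $V_q(S)$. Let $U_R$ be the set of Voronoi edge bends and Voronoi vertices of $\mathrm{Vor}_Q(R)$ that conflict (with respect to $R$) with at least one of $p_1,\dots,p_n$, and for each $i$ let $V_S|_{p_i}$ be the set of Voronoi edge bends and Voronoi vertices of $\mathrm{Vor}_Q(S)$ that conflict (with respect to $S$) with $p_i$. Then $U_R\subseteq\bigcup_{i=1}^n V_S|_{p_i}$.
   Context: Let $Q\subset\mathbb{R}^2$ be a convex polygon with a constant number of vertices containing the origin in its interior; $d_Q(x,y)=\min\{\lambda\ge 0: y\in\lambda Q+x\}$; $Q^*=\{-x:x\in Q\}$. For a finite set $Y$ and $p\in Y$, $V_p(Y)=\{x: d_Q(p,x)\le d_Q(q,x)\ \forall q\in Y\}$ and $\mathrm{Vor}_Q(Y)$ is the resulting subdivision. Voronoi edges are polygonal curves; their interior vertices are Voronoi edge bends. For $x\in\mathbb{R}^2$, the largest homothetic copy $\lambda Q^*+x$ ($\lambda\ge0$) of $Q^*$ centered at $x$ whose interior avoids $Y$ is denoted $Q^*_x$ (w.r.t. $Y$); a point $p$ conflicts with $x$ w.r.t. $Y$ if $p\in Q^*_x$, and conflicts with a set if it conflicts with some point of it. General position means: no two sides of $Q$ are parallel; no line through two of the points is parallel to a side of $Q$; no four points lie on the boundary of a homothetic copy of $Q^*$.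 *)

theory Defs
  imports "HOL-Analysis.Analysis"
begin

type_synonym pt = "real ^ 2"

definition convex_polygon_shape :: "pt set \<Rightarrow> bool" where
  "convex_polygon_shape Q \<longleftrightarrow> polytope Q \<and> 0 \<in> interior Q"

definition homothet :: "pt set \<Rightarrow> real \<Rightarrow> pt \<Rightarrow> pt set" where
  "homothet Q lam c = (\<lambda>y. c + lam *\<^sub>R y) ` Q"

definition dQ :: "pt set \<Rightarrow> pt \<Rightarrow> pt \<Rightarrow> real" where
  "dQ Q x y = Inf {lam. lam \<ge> 0 \<and> y \<in> homothet Q lam x}"

definition Qstar :: "pt set \<Rightarrow> pt set" where
  "Qstar Q = uminus ` Q"

definition vcell :: "pt set \<Rightarrow> pt set \<Rightarrow> pt \<Rightarrow> pt set" where
  "vcell Q Y p = {x. \<forall>q\<in>Y. dQ Q p x \<le> dQ Q q x}"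

definition sites_at :: "pt set \<Rightarrow> pt set \<Rightarrow> pt \<Rightarrow> pt set" where
  "sites_at Q Y x = {p \<in> Y. x \<in> vcell Q Y p}"

definition voronoi_vertex :: "pt set \<Rightarrow> pt set \<Rightarrow> pt \<Rightarrow> bool" where
  "voronoi_vertex Q Y x \<longleftrightarrow> card (sites_at Q Y x) \<ge> 3"

text \<open>Voronoi edge bend: a point of the Voronoi edge between exactly two regions
  V_p, V_q at which the polygonal curve V_p \<inter> V_q is not locally a straight line
  (i.e. an interior vertex of the polygonal Voronoi edge).\<close>
definition voronoi_edge_bend :: "pt set \<Rightarrow> pt set \<Rightarrow> pt \<Rightarrow> bool" where
  "voronoi_edge_bend Q Y x \<longleftrightarrow>
     (\<exists>p q. p \<noteq> q \<and> sites_at Q Y x = {p, q} \<and>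
        \<not> (\<exists>v e. v \<noteq> 0 \<and> e > 0 \<and>
              vcell Q Y p \<inter> vcell Q Y q \<inter> ball x e
                = {x + t *\<^sub>R v | t. True} \<inter> ball x e))"

definition vor_features :: "pt set \<Rightarrow> pt set \<Rightarrow> pt set" where
  "vor_features Q Y = {x. voronoi_vertex Q Y x \<or> voronoi_edge_bend Q Y x}"

definition Qstar_at :: "pt set \<Rightarrow> pt set \<Rightarrow> pt \<Rightarrow> pt set" where
  "Qstar_at Q Y x = homothet (Qstar Q)
      (Sup {lam. lam \<ge> 0 \<and> interior (homothet (Qstar Q) lam x) \<inter> Y = {}}) x"

definition conflicts :: "pt set \<Rightarrow> pt set \<Rightarrow> pt \<Rightarrow> pt \<Rightarrow> bool" where
  "conflicts Q Y p x \<longleftrightarrow> p \<in> Qstar_at Q Y x"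

definition conflicts_set :: "pt set \<Rightarrow> pt set \<Rightarrow> pt \<Rightarrow> pt set \<Rightarrow> bool" where
  "conflicts_set Q Y p A \<longleftrightarrow> (\<exists>x\<in>A. conflicts Q Y p x)"

definition sides :: "pt set \<Rightarrow> pt set set" where
  "sides Q = {F. F face_of Q \<and> aff_dim F = 1}"

definition parallel_to :: "pt \<Rightarrow> pt set \<Rightarrow> bool" where
  "parallel_to u F \<longleftrightarrow> (\<forall>a\<in>F. \<forall>b\<in>F. collinear {0, u, b - a})"

definition general_position :: "pt set \<Rightarrow> pt set \<Rightarrow> bool" where
  "general_position Q P \<longleftrightarrow>
     (\<forall>F\<in>sides Q. \<forall>G\<in>sides Q. F \<noteq> G \<longrightarrow>
        \<not> (\<forall>a\<in>G. \<forall>b\<in>G. parallel_to (b - a) F)) \<and>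
     (\<forall>p\<in>P. \<forall>q\<in>P. p \<noteq> q \<longrightarrow> (\<forall>F\<in>sides Q. \<not> parallel_to (q - p) F)) \<and>
     \<not> (\<exists>lam c A. lam > 0 \<and> A \<subseteq> P \<and> card A = 4 \<and>
          A \<subseteq> frontier (homothet (Qstar Q) lam c))"

end

theory Submission
  imports Defs
begin

(* A point x conflicts with p with respect to Y iff d_Q(p,x) is at most the distance from x to
   its nearest site in Y. Suppose p conflicts with x with respect to R but not with respect to S.
   Moving from p towards x, continuity yields a point y = p + t(x - p), 0 < t < 1, at which p is
   exactly as far as the nearest site s of S. Then p conflicts with y, which lies in V_s(S), so
   s is in R. Now d_Q(s,y) = d_Q(p,y) and d_Q(p,x) <= d_R(x) <= d_Q(s,x), so the triangle
   inequality d_Q(s,x) <= d_Q(y,x) + d_Q(s,y) is an equality.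
   Equality in the triangle inequality of a polygonal gauge puts the two unit directions on a
   common side of Q, and that side is parallel to s - p, against general position.
   Hence p conflicts with x with respect to S as well; so every site of S at distance at most
   d_R(x) from x has x in its region and belongs to R. The remaining sites are strictly farther,
   so near x the diagrams of R and S coincide and x is a feature of Vor_Q(S). *)

lemma mem_homothet_iff: "b \<in> homothet Q l a \<longleftrightarrow> (\<exists>q\<in>Q. b = a + l *\<^sub>R q)"
  by (auto simp: homothet_def)

lemma vor_features_empty [simp]: "vor_features Q {} = {}"
  by (auto simp: vor_features_def voronoi_vertex_def voronoi_edge_bend_def sites_at_def)

lemma vor_features_if_locally_eq:
  assumes "e > 0"
    and cells: "\<And>q. vcell Q S q \<inter> ball x e = vcell Q R q \<inter> ball x e"
    and sites: "sites_at Q S x = sites_at Q R x"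
    and "x \<in> vor_features Q R"
  shows "x \<in> vor_features Q S"
  using \<open>x \<in> vor_features Q R\<close> unfolding vor_features_def
proof (elim CollectE disjE)
  assume "voronoi_vertex Q R x"
  then show "x \<in> {x. voronoi_vertex Q S x \<or> voronoi_edge_bend Q S x}"
    using sites by (simp add: voronoi_vertex_def)
next
  assume "voronoi_edge_bend Q R x"
  then obtain a b where ab: "a \<noteq> b" "sites_at Q R x = {a, b}"
    and not_line: "\<not> (\<exists>v e. v \<noteq> 0 \<and> e > 0 \<and>
        vcell Q R a \<inter> vcell Q R b \<inter> ball x e = {x + t *\<^sub>R v | t. True} \<inter> ball x e)"
    unfolding voronoi_edge_bend_def by blast
  have "\<not> (\<exists>v e'. v \<noteq> 0 \<and> e' > 0 \<and>
      vcell Q S a \<inter> vcell Q S b \<inter> ball x e' = {x + t *\<^sub>R v | t. True} \<inter> ball x e')"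
  proof
    assume "\<exists>v e'. v \<noteq> 0 \<and> e' > 0 \<and>
      vcell Q S a \<inter> vcell Q S b \<inter> ball x e' = {x + t *\<^sub>R v | t. True} \<inter> ball x e'"
    then obtain v e' where v: "v \<noteq> 0" "e' > 0"
      and line: "vcell Q S a \<inter> vcell Q S b \<inter> ball x e' = {x + t *\<^sub>R v | t. True} \<inter> ball x e'"
      by blast
    define r where "r = min e e'"
    have "r > 0" using \<open>e > 0\<close> v by (simp add: r_def)
    have balls: "ball x r \<subseteq> ball x e" "ball x r \<subseteq> ball x e'" by (auto simp: r_def)
    have "vcell Q R a \<inter> vcell Q R b \<inter> ball x r = vcell Q S a \<inter> vcell Q S b \<inter> ball x r"
      using cells[of a] cells[of b] balls by blast
    also have "\<dots> = {x + t *\<^sub>R v | t. True} \<inter> ball x r"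
      using line balls by blast
    finally show False using not_line v \<open>r > 0\<close> by blast
  qed
  then have "voronoi_edge_bend Q S x"
    unfolding voronoi_edge_bend_def using ab sites by blast
  then show "x \<in> {x. voronoi_vertex Q S x \<or> voronoi_edge_bend Q S x}" by simp
qed

locale convex_shape =
  fixes Q :: "pt set"
  assumes convex: "convex Q" and compact: "compact Q" and zero_interior: "0 \<in> interior Q"
begin

lemma zero_mem: "0 \<in> Q"
  using zero_interior interior_subset by blast

lemma cball_subset: obtains r where "r > 0" "cball 0 r \<subseteq> Q"
  using zero_interior mem_interior_cball by blast

lemma mem_homothet_mono:
  assumes "b \<in> homothet Q l a" "0 \<le> l" "l \<le> m"
  shows "b \<in> homothet Q m a"
proof -
  from assms obtain q where q: "q \<in> Q" "b = a + l *\<^sub>R q" by (auto simp: mem_homothet_iff)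
  show ?thesis
  proof (cases "l = 0")
    case True
    then show ?thesis using q zero_mem by (auto simp: mem_homothet_iff intro!: bexI[of _ 0])
  next
    case False
    then have "l > 0" "m > 0" using assms by auto
    then have "(l/m) *\<^sub>R q + (1 - l/m) *\<^sub>R 0 \<in> Q"
      using convex q(1) zero_mem assms by (intro convexD) (auto simp: field_simps)
    moreover have "b = a + m *\<^sub>R ((l/m) *\<^sub>R q + (1 - l/m) *\<^sub>R 0)"
      using q \<open>m > 0\<close> by simp
    ultimately show ?thesis unfolding mem_homothet_iff by blast
  qed
qed

lemma ex_homothet_mem: "\<exists>l\<ge>0. b \<in> homothet Q l a"
proof -
  obtain r where r: "r > 0" "cball 0 r \<subseteq> Q" by (rule cball_subset)
  define l where "l = norm (b - a) / r + 1"
  have "l > 0" using r by (simp add: l_def add_nonneg_pos)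
  have "norm ((1/l) *\<^sub>R (b - a)) = norm (b - a) / l" using \<open>l > 0\<close> by simp
  also have "\<dots> \<le> r" using r \<open>l > 0\<close> by (simp add: l_def field_simps)
  finally have "(1/l) *\<^sub>R (b - a) \<in> Q" using r by auto
  moreover have "b = a + l *\<^sub>R ((1/l) *\<^sub>R (b - a))" using \<open>l > 0\<close> by simp
  ultimately have "b \<in> homothet Q l a" unfolding mem_homothet_iff by blast
  then show ?thesis using \<open>l > 0\<close> by (intro exI[of _ l]) auto
qed

lemma dQ_nonneg: "dQ Q a b \<ge> 0"
  unfolding dQ_def using ex_homothet_mem[of b a] by (intro cInf_greatest) auto

lemma dQ_mem_homothet: "b \<in> homothet Q (dQ Q a b) a"
proof -
  define A where "A = {lam. lam \<ge> 0 \<and> b \<in> homothet Q lam a}"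
  define m where "m = Inf A"
  have "A \<noteq> {}" using ex_homothet_mem[of b a] by (auto simp: A_def)
  have bdd: "bdd_below A" by (auto simp: A_def bdd_below_def)
  have "\<exists>l. l \<in> A \<and> l < m + 1 / real (Suc n)" for n
    using cInf_less_iff[OF \<open>A \<noteq> {}\<close> bdd, of "m + 1 / real (Suc n)"] unfolding m_def by auto
  then obtain L where L: "\<And>n. L n \<in> A" "\<And>n. L n < m + 1 / real (Suc n)" by metis
  have m_le: "\<And>n. m \<le> L n" using L(1) bdd unfolding m_def by (intro cInf_lower) auto
  have "\<forall>n. \<exists>q. q \<in> Q \<and> b = a + L n *\<^sub>R q" using L(1) by (auto simp: A_def mem_homothet_iff)
  then obtain q where q: "\<And>n. q n \<in> Q" "\<And>n. b = a + L n *\<^sub>R q n" by metis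
  obtain q0 r where q0: "q0 \<in> Q" "strict_mono r" "(q \<circ> r) \<longlonglongrightarrow> q0"
    using compact q(1) unfolding compact_def by metis
  have "L \<longlonglongrightarrow> m"
  proof (rule real_tendsto_sandwich[of "\<lambda>n. m" _ _ "\<lambda>n. m + 1 / real (Suc n)"])
    have "(\<lambda>n. m + inverse (real (Suc n))) \<longlonglongrightarrow> m + 0"
      by (intro tendsto_intros LIMSEQ_inverse_real_of_nat)
    then show "(\<lambda>n. m + 1 / real (Suc n)) \<longlonglongrightarrow> m" by (simp add: inverse_eq_divide)
    show "\<forall>\<^sub>F n in sequentially. m \<le> L n" using m_le by simp
    show "\<forall>\<^sub>F n in sequentially. L n \<le> m + 1 / real (Suc n)"
      using L(2) by (intro always_eventually allI less_imp_le) auto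
  qed simp
  then have "(\<lambda>n. a + L (r n) *\<^sub>R (q \<circ> r) n) \<longlonglongrightarrow> a + m *\<^sub>R q0"
    using LIMSEQ_subseq_LIMSEQ q0 by (intro tendsto_intros) (auto simp: o_def)
  moreover have "(\<lambda>n. a + L (r n) *\<^sub>R (q \<circ> r) n) = (\<lambda>n. b)" using q(2) by (auto simp: o_def)
  ultimately have "b = a + m *\<^sub>R q0" using LIMSEQ_const_iff by metis
  then show ?thesis using q0(1) unfolding dQ_def m_def A_def by (auto simp: mem_homothet_iff)
qed

lemma mem_homothet_iff_dQ_le: "0 \<le> l \<Longrightarrow> b \<in> homothet Q l a \<longleftrightarrow> dQ Q a b \<le> l"
  using mem_homothet_mono[OF dQ_mem_homothet dQ_nonneg]
  unfolding dQ_def by (auto intro: cInf_lower simp: bdd_below_def)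

definition gauge :: "pt \<Rightarrow> real" where
  "gauge v = dQ Q 0 v"

lemma gauge_nonneg: "gauge v \<ge> 0"
  by (simp add: gauge_def dQ_nonneg)

lemma mem_homothet_0_iff: "v \<in> homothet Q l 0 \<longleftrightarrow> (\<exists>q\<in>Q. v = l *\<^sub>R q)"
  by (simp add: mem_homothet_iff)

lemma mem_homothet_0_iff_gauge_le: "0 \<le> l \<Longrightarrow> v \<in> homothet Q l 0 \<longleftrightarrow> gauge v \<le> l"
  by (simp add: mem_homothet_iff_dQ_le gauge_def)

lemma gauge_mem_homothet: "\<exists>q\<in>Q. v = gauge v *\<^sub>R q"
  using mem_homothet_0_iff_gauge_le[OF gauge_nonneg, of v v] by (simp add: mem_homothet_0_iff)

lemma dQ_eq_gauge: "dQ Q a b = gauge (b - a)"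
proof -
  have hom: "b \<in> homothet Q l a \<longleftrightarrow> b - a \<in> homothet Q l 0" for l
    by (auto simp: mem_homothet_iff algebra_simps)
  have "dQ Q a b \<le> l \<longleftrightarrow> gauge (b - a) \<le> l" if "0 \<le> l" for l
    using hom mem_homothet_iff_dQ_le[OF that] mem_homothet_0_iff_gauge_le[OF that] by metis
  then show ?thesis using dQ_nonneg[of a b] gauge_nonneg[of "b - a"]
    by (meson antisym order_refl)
qed

lemma gauge_eq_0_iff [simp]: "gauge v = 0 \<longleftrightarrow> v = 0"
proof
  assume "gauge v = 0"
  then show "v = 0" using gauge_mem_homothet[of v] by auto
next
  assume "v = 0"
  then have "v \<in> homothet Q 0 0" using zero_mem by (auto simp: mem_homothet_0_iff)
  then show "gauge v = 0" using mem_homothet_0_iff_gauge_le[of 0 v] gauge_nonneg[of v] by simp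
qed

lemma gauge_zero [simp]: "gauge 0 = 0"
  by simp

lemma gauge_scaleR: assumes "t \<ge> 0" shows "gauge (t *\<^sub>R v) = t * gauge v"
proof (cases "t = 0")
  case False
  then have "t > 0" using assms by simp
  obtain q where q: "q \<in> Q" "v = gauge v *\<^sub>R q" using gauge_mem_homothet[of v] by blast
  have "t *\<^sub>R v = (t * gauge v) *\<^sub>R q" using q(2) by (metis scaleR_scaleR)
  then have le: "gauge (t *\<^sub>R v) \<le> t * gauge v"
    using q(1) \<open>t > 0\<close> gauge_nonneg mem_homothet_0_iff_gauge_le[of "t * gauge v"]
    by (auto simp: mem_homothet_0_iff)
  obtain q' where q': "q' \<in> Q" "t *\<^sub>R v = gauge (t *\<^sub>R v) *\<^sub>R q'"
    using gauge_mem_homothet[of "t *\<^sub>R v"] by blast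
  have "v = (1/t) *\<^sub>R (t *\<^sub>R v)" using \<open>t > 0\<close> by simp
  also have "\<dots> = (gauge (t *\<^sub>R v) / t) *\<^sub>R q'" by (subst q'(2)) simp
  finally have "gauge v \<le> gauge (t *\<^sub>R v) / t"
    using q'(1) \<open>t > 0\<close> gauge_nonneg mem_homothet_0_iff_gauge_le[of "gauge (t *\<^sub>R v) / t"]
    by (auto simp: mem_homothet_0_iff)
  then have "t * gauge v \<le> gauge (t *\<^sub>R v)" using \<open>t > 0\<close> by (simp add: field_simps)
  with le show ?thesis by simp
qed simp

lemma gauge_triangle: "gauge (u + w) \<le> gauge u + gauge w"
proof -
  obtain q1 where q1: "q1 \<in> Q" "u = gauge u *\<^sub>R q1" using gauge_mem_homothet[of u] by blast
  obtain q2 where q2: "q2 \<in> Q" "w = gauge w *\<^sub>R q2" using gauge_mem_homothet[of w] by blast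
  define s where "s = gauge u + gauge w"
  have "u + w \<in> homothet Q s 0"
  proof (cases "s = 0")
    case True
    then have "gauge u = 0" "gauge w = 0"
      using gauge_nonneg[of u] gauge_nonneg[of w] unfolding s_def by linarith+
    then have "u = 0" "w = 0" by simp_all
    then show ?thesis using zero_mem by (auto simp: mem_homothet_0_iff intro!: bexI[of _ 0])
  next
    case False
    then have "s > 0" using gauge_nonneg[of u] gauge_nonneg[of w] by (simp add: s_def)
    have sum1: "gauge u / s + gauge w / s = 1"
      using \<open>s > 0\<close> by (simp add: s_def add_divide_distrib[symmetric])
    have "(gauge u / s) *\<^sub>R q1 + (gauge w / s) *\<^sub>R q2 \<in> Q"
      using \<open>s > 0\<close> gauge_nonneg
      by (intro convexD[OF convex q1(1) q2(1) _ _ sum1] divide_nonneg_pos) auto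
    moreover have "u + w = s *\<^sub>R ((gauge u / s) *\<^sub>R q1 + (gauge w / s) *\<^sub>R q2)"
      using q1 q2 \<open>s > 0\<close> by (simp add: scaleR_add_right)
    ultimately show ?thesis unfolding mem_homothet_0_iff by blast
  qed
  then show ?thesis
    using mem_homothet_0_iff_gauge_le gauge_nonneg[of u] gauge_nonneg[of w] by (simp add: s_def)
qed

lemma gauge_le_norm: obtains r where "r > 0" "\<And>v. gauge v \<le> norm v / r"
proof -
  obtain r where r: "r > 0" "cball 0 r \<subseteq> Q" by (rule cball_subset)
  have bound: "gauge v \<le> norm v / r" for v
  proof (cases "v = 0")
    case False
    have "(r / norm v) *\<^sub>R v \<in> Q" using r False by (intro subsetD[OF r(2)]) simp
    moreover have "v = (norm v / r) *\<^sub>R ((r / norm v) *\<^sub>R v)" using r False by simp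
    ultimately have "v \<in> homothet Q (norm v / r) 0" unfolding mem_homothet_0_iff by blast
    then show ?thesis using mem_homothet_0_iff_gauge_le r by simp
  qed simp
  show ?thesis by (rule that[OF r(1) bound])
qed

lemma continuous_on_gauge: "continuous_on A gauge"
proof -
  obtain r where r: "r > 0" "\<And>v. gauge v \<le> norm v / r"
    using gauge_le_norm by blast
  have "dist (gauge u) (gauge w) \<le> (1/r) * dist u w" for u w
  proof -
    have "gauge u \<le> gauge w + gauge (u - w)" using gauge_triangle[of w "u - w"] by simp
    moreover have "gauge w \<le> gauge u + gauge (w - u)" using gauge_triangle[of u "w - u"] by simp
    moreover have "gauge (u - w) \<le> dist u w / r" using r(2) by (simp add: dist_norm)
    moreover have "gauge (w - u) \<le> dist u w / r"
      using r(2)[of "w - u"] by (simp add: dist_norm norm_minus_commute)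
    ultimately show ?thesis by (simp add: dist_real_def abs_le_iff)
  qed
  then have "(1/r)-lipschitz_on A gauge" using r by (auto simp: lipschitz_on_def)
  then show ?thesis by (rule lipschitz_on_continuous_on)
qed

lemma continuous_on_dQ_right: "continuous_on A (\<lambda>y. dQ Q a y)"
  unfolding dQ_eq_gauge by (rule continuous_on_compose2[OF continuous_on_gauge]) (auto intro!: continuous_intros)

lemma continuous_on_dQ_left: "continuous_on A (\<lambda>z. dQ Q z x)"
  unfolding dQ_eq_gauge by (rule continuous_on_compose2[OF continuous_on_gauge]) (auto intro!: continuous_intros)

lemma dQ_eq_0_iff: "dQ Q z x = 0 \<longleftrightarrow> z = x"
  by (auto simp: dQ_eq_gauge)

lemma dQ_along_ray: "0 \<le> t \<Longrightarrow> dQ Q p (p + t *\<^sub>R (x - p)) = t * dQ Q p x"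
  by (simp add: dQ_eq_gauge gauge_scaleR)

lemma mem_iff_gauge_le_1: "z \<in> Q \<longleftrightarrow> gauge z \<le> 1"
proof -
  have "homothet Q 1 0 = Q" by (auto simp: homothet_def)
  then show ?thesis using mem_homothet_0_iff_gauge_le[of 1 z] by simp
qed

lemma gauge_less_1_if_interior: assumes "z \<in> interior Q" shows "gauge z < 1"
proof (cases "z = 0")
  case False
  obtain e where e: "e > 0" "cball z e \<subseteq> Q" using assms mem_interior_cball by blast
  define c where "c = e / norm z"
  have "c > 0" using e False by (simp add: c_def)
  have "dist z ((1 + c) *\<^sub>R z) = c * norm z"
    using \<open>c > 0\<close> by (simp add: dist_norm algebra_simps)
  also have "\<dots> = e" using False by (simp add: c_def)
  finally have "(1 + c) *\<^sub>R z \<in> Q" using e by auto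
  then have "(1 + c) * gauge z \<le> 1"
    using mem_iff_gauge_le_1 gauge_scaleR[of "1 + c" z] \<open>c > 0\<close> by simp
  show ?thesis
  proof (rule ccontr)
    assume "\<not> gauge z < 1"
    then have "(1 + c) * 1 \<le> (1 + c) * gauge z" using \<open>c > 0\<close> by (intro mult_left_mono) auto
    then have "(1 + c) * 1 \<le> (1::real)" using \<open>(1 + c) * gauge z \<le> 1\<close> by (rule order_trans)
    then show False using \<open>c > 0\<close> by simp
  qed
qed simp

lemma homothet_Qstar_eq: "0 \<le> l \<Longrightarrow> homothet (Qstar Q) l x = {z. dQ Q z x \<le> l}"
proof -
  assume "0 \<le> l"
  have "z \<in> homothet (Qstar Q) l x \<longleftrightarrow> x \<in> homothet Q l z" for z
  proof -
    have "z \<in> homothet (Qstar Q) l x \<longleftrightarrow> (\<exists>q\<in>Q. z = x + l *\<^sub>R (- q))"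
      unfolding homothet_def Qstar_def by (auto simp: image_iff)
    also have "\<dots> \<longleftrightarrow> (\<exists>q\<in>Q. x = z + l *\<^sub>R q)"
      by (auto simp: algebra_simps)
    finally show ?thesis by (simp add: mem_homothet_iff)
  qed
  then show ?thesis using mem_homothet_iff_dQ_le[OF \<open>0 \<le> l\<close>] by auto
qed

(* The supporting line of Q at z cuts out a side containing the chord from u to w. *)

lemma side_parallel_to_chord:
  assumes "u \<in> Q" "w \<in> Q" "gauge z = 1"
    and z: "z = (1 - t) *\<^sub>R u + t *\<^sub>R w" and "0 < t" "t < 1" and "u \<noteq> z"
  shows "\<exists>F\<in>sides Q. parallel_to (c *\<^sub>R (u - z)) F"
proof -
  have "z \<in> Q" "z \<notin> interior Q"
    using \<open>gauge z = 1\<close> mem_iff_gauge_le_1 gauge_less_1_if_interior by fastforce+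
  moreover have "closure Q = Q" using compact compact_imp_closed closure_closed by blast
  moreover have "rel_interior Q = interior Q"
    using zero_interior by (intro rel_interior_nonempty_interior) auto
  ultimately obtain a :: pt where a: "a \<noteq> 0" "\<And>y. y \<in> Q \<Longrightarrow> a \<bullet> z \<le> a \<bullet> y"
    using supporting_hyperplane_relative_frontier[OF convex, of z] by metis
  define b where "b = - a"
  have "b \<noteq> 0" using a by (simp add: b_def)
  have b_le: "\<And>y. y \<in> Q \<Longrightarrow> b \<bullet> y \<le> b \<bullet> z" using a by (simp add: b_def)
  have "b \<bullet> z = (1 - t) * (b \<bullet> u) + t * (b \<bullet> w)" using z by (simp add: inner_add_right)
  moreover have "b \<bullet> u \<le> b \<bullet> z" "b \<bullet> w \<le> b \<bullet> z" using b_le assms(1,2) by auto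
  ultimately have bu: "b \<bullet> u = b \<bullet> z"
  proof -
    assume "b \<bullet> z = (1 - t) * (b \<bullet> u) + t * (b \<bullet> w)" "b \<bullet> u \<le> b \<bullet> z" "b \<bullet> w \<le> b \<bullet> z"
    moreover have "t * (b \<bullet> w) \<le> t * (b \<bullet> z)" using \<open>b \<bullet> w \<le> b \<bullet> z\<close> \<open>0 < t\<close> by simp
    moreover have "(1 - t) * (b \<bullet> u) < (1 - t) * (b \<bullet> z)" if "b \<bullet> u < b \<bullet> z"
      using that \<open>t < 1\<close> by simp
    ultimately show ?thesis by (fastforce simp: algebra_simps)
  qed
  define F where "F = Q \<inter> {y. b \<bullet> y = b \<bullet> z}"
  have "F face_of Q"
    unfolding F_def using convex b_le by (rule face_of_Int_supporting_hyperplane_le)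
  have "u \<in> F" "z \<in> F" using assms(1) \<open>z \<in> Q\<close> bu by (auto simp: F_def)
  have "aff_dim F \<le> aff_dim {y. b \<bullet> y = b \<bullet> z}" by (rule aff_dim_subset) (auto simp: F_def)
  also have "\<dots> = 1" using \<open>b \<noteq> 0\<close> by simp
  finally have "aff_dim F \<le> 1" .
  moreover have "aff_dim F \<noteq> 0" using \<open>u \<in> F\<close> \<open>z \<in> F\<close> \<open>u \<noteq> z\<close> aff_dim_eq_0[of F] by auto
  moreover have "aff_dim F \<noteq> -1" using \<open>u \<in> F\<close> aff_dim_empty[of F] by auto
  ultimately have "aff_dim F = 1" using aff_dim_geq[of F] by linarith
  then have "F \<in> sides Q" using \<open>F face_of Q\<close> by (simp add: sides_def)
  moreover have "parallel_to (c *\<^sub>R (u - z)) F"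
    unfolding parallel_to_def
  proof (intro ballI)
    fix p q assume "p \<in> F" "q \<in> F"
    then have "{0, c *\<^sub>R (u - z), q - p} \<subseteq> {v. b \<bullet> v = 0}"
      using bu by (auto simp: F_def inner_diff_right)
    then have "aff_dim {0, c *\<^sub>R (u - z), q - p} \<le> aff_dim {v. b \<bullet> v = 0}" by (rule aff_dim_subset)
    also have "\<dots> = 1" using \<open>b \<noteq> 0\<close> by simp
    finally show "collinear {0, c *\<^sub>R (u - z), q - p}" by (simp add: collinear_aff_dim)
  qed
  ultimately show ?thesis by blast
qed

(* The hypotheses make the triangle inequality d(s,x) <= d(y,x) + d(s,y) through
   y = p + t(x - p) tight; after scaling, the unit vectors u, w and z below lie on a chord
   of Q through the boundary point z, and s - p is a multiple of u - z. *)

lemma side_parallel_if_tight_on_segment: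
  assumes "0 < t" "t < 1" "0 < dQ Q p x" "s \<noteq> p"
    and at_y: "dQ Q s (p + t *\<^sub>R (x - p)) = t * dQ Q p x"
    and at_x: "dQ Q p x \<le> dQ Q s x"
  shows "\<exists>F\<in>sides Q. parallel_to (s - p) F"
proof -
  define lam where "lam = dQ Q p x"
  define y where "y = p + t *\<^sub>R (x - p)"
  have xy: "x - y = (1 - t) *\<^sub>R (x - p)" by (simp add: y_def algebra_simps)
  have gauge_xy: "gauge (x - y) = (1 - t) * lam"
    using \<open>t < 1\<close> by (simp add: xy gauge_scaleR lam_def dQ_eq_gauge)
  have gauge_ys: "gauge (y - s) = t * lam" using at_y by (simp add: dQ_eq_gauge y_def lam_def)
  have "dQ Q s x = gauge ((x - y) + (y - s))" by (simp add: dQ_eq_gauge)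
  also have "\<dots> \<le> (1 - t) * lam + t * lam" using gauge_triangle gauge_xy gauge_ys by metis
  finally have "gauge (x - s) = lam" using at_x by (simp add: dQ_eq_gauge lam_def algebra_simps)
  define u where "u = (1 / lam) *\<^sub>R (x - p)"
  define w where "w = (1 / (t * lam)) *\<^sub>R (y - s)"
  define z where "z = (1 / lam) *\<^sub>R (x - s)"
  have "lam > 0" using assms(3) by (simp add: lam_def)
  have "gauge (x - p) = lam" by (simp add: lam_def dQ_eq_gauge)
  then have "gauge u = 1" using \<open>lam > 0\<close> by (simp add: u_def gauge_scaleR)
  moreover have "gauge w = 1" using \<open>lam > 0\<close> \<open>0 < t\<close> by (simp add: w_def gauge_scaleR gauge_ys)
  moreover have "gauge z = 1" using \<open>lam > 0\<close> \<open>gauge (x - s) = lam\<close> by (simp add: z_def gauge_scaleR)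
  moreover have "z = (1 - t) *\<^sub>R u + t *\<^sub>R w"
  proof -
    have "x - s = (1 - t) *\<^sub>R (x - p) + (y - s)" using xy by (simp add: algebra_simps)
    then have "z = (1/lam) *\<^sub>R ((1 - t) *\<^sub>R (x - p)) + (1/lam) *\<^sub>R (y - s)"
      unfolding z_def by (simp only: scaleR_add_right)
    moreover have "t *\<^sub>R w = (1/lam) *\<^sub>R (y - s)" using \<open>0 < t\<close> \<open>lam > 0\<close> by (simp add: w_def)
    ultimately show ?thesis by (simp add: u_def)
  qed
  moreover have "u \<noteq> z" using \<open>lam > 0\<close> \<open>s \<noteq> p\<close> by (auto simp: u_def z_def)
  moreover have "s - p = lam *\<^sub>R (u - z)" using \<open>lam > 0\<close> by (simp add: u_def z_def algebra_simps)
  ultimately show ?thesis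
    using side_parallel_to_chord[of u w z t lam] mem_iff_gauge_le_1 assms(1,2) by auto
qed

definition nearest_dQ :: "pt set \<Rightarrow> pt \<Rightarrow> real" where
  "nearest_dQ Y x = Min ((\<lambda>y. dQ Q y x) ` Y)"

lemma nearest_dQ_le: "finite Y \<Longrightarrow> y \<in> Y \<Longrightarrow> nearest_dQ Y x \<le> dQ Q y x"
  unfolding nearest_dQ_def by (rule Min_le) auto

lemma nearest_dQ_attained:
  assumes "finite Y" "Y \<noteq> {}" obtains y where "y \<in> Y" "dQ Q y x = nearest_dQ Y x"
proof -
  have "nearest_dQ Y x \<in> (\<lambda>y. dQ Q y x) ` Y" unfolding nearest_dQ_def using assms by (intro Min_in) auto
  then show ?thesis using that by auto
qed

lemma nearest_dQ_nonneg: "finite Y \<Longrightarrow> Y \<noteq> {} \<Longrightarrow> nearest_dQ Y x \<ge> 0"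
  using nearest_dQ_attained dQ_nonneg by metis

lemma continuous_on_nearest_dQ: "finite Y \<Longrightarrow> Y \<noteq> {} \<Longrightarrow> continuous_on A (nearest_dQ Y)"
  unfolding nearest_dQ_def
proof (induction Y rule: finite_ne_induct)
  case (singleton y) then show ?case by (simp add: continuous_on_dQ_right)
next
  case (insert a F)
  have "(\<lambda>x. Min ((\<lambda>y. dQ Q y x) ` insert a F)) = (\<lambda>x. min (dQ Q a x) (Min ((\<lambda>y. dQ Q y x) ` F)))"
    using insert by (simp add: Min_insert)
  moreover have "continuous_on A (\<lambda>x. min (dQ Q a x) (Min ((\<lambda>y. dQ Q y x) ` F)))"
    by (intro continuous_on_min continuous_on_dQ_right insert.IH)
  ultimately show ?case by metis
qed

lemma mem_vcell_iff: "finite Y \<Longrightarrow> Y \<noteq> {} \<Longrightarrow> x \<in> vcell Q Y q \<longleftrightarrow> dQ Q q x \<le> nearest_dQ Y x"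
  unfolding vcell_def nearest_dQ_def by auto

lemma Qstar_at_eq:
  assumes "finite Y" "Y \<noteq> {}"
  shows "Qstar_at Q Y x = {z. dQ Q z x \<le> nearest_dQ Y x}"
proof -
  define L where "L = {lam. lam \<ge> 0 \<and> interior (homothet (Qstar Q) lam x) \<inter> Y = {}}"
  define d where "d = nearest_dQ Y x"
  have "d \<ge> 0" using nearest_dQ_nonneg assms by (simp add: d_def)
  have "y \<notin> interior {z. dQ Q z x \<le> d}" if "y \<in> Y" for y
  proof
    assume "y \<in> interior {z. dQ Q z x \<le> d}"
    then obtain e where "e > 0" and e: "ball y e \<subseteq> {z. dQ Q z x \<le> d}" using mem_interior by blast
    have "d \<le> dQ Q y x" using nearest_dQ_le assms that by (simp add: d_def)
    moreover have "dQ Q y x \<le> d" using e \<open>e > 0\<close> centre_in_ball by blast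
    ultimately have "dQ Q y x = d" by simp
    show False
    proof (cases "y = x")
      case True
      then have "d = 0" using \<open>dQ Q y x = d\<close> dQ_eq_0_iff[of x x] by simp
      have "dQ Q z x \<le> d \<longleftrightarrow> z = x" for z
        using \<open>d = 0\<close> dQ_nonneg[of z x] dQ_eq_0_iff[of z x] by auto
      then have "{z. dQ Q z x \<le> d} = {x}" by auto
      then show False using \<open>y \<in> interior {z. dQ Q z x \<le> d}\<close> by simp
    next
      case False
      define eps where "eps = e / (2 * norm (y - x))"
      have "eps > 0" using \<open>e > 0\<close> False by (simp add: eps_def)
      define z where "z = y + eps *\<^sub>R (y - x)"
      have "dist y z = e / 2" using \<open>e > 0\<close> \<open>eps > 0\<close> False by (simp add: z_def dist_norm eps_def)
      then have "z \<in> ball y e" using \<open>e > 0\<close> by simp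
      then have "dQ Q z x \<le> d" using e by auto
      moreover have "x - z = (1 + eps) *\<^sub>R (x - y)" by (simp add: z_def algebra_simps)
      then have "dQ Q z x = (1 + eps) * dQ Q y x" using \<open>eps > 0\<close> by (simp add: dQ_eq_gauge gauge_scaleR)
      ultimately have "eps * dQ Q y x \<le> 0" using \<open>dQ Q y x = d\<close> by (simp add: algebra_simps)
      then have "dQ Q y x = 0" using \<open>eps > 0\<close> dQ_nonneg[of y x] by (simp add: mult_le_0_iff)
      then show False using False dQ_eq_0_iff by simp
    qed
  qed
  then have "d \<in> L" using \<open>d \<ge> 0\<close> homothet_Qstar_eq by (auto simp: L_def d_def)
  moreover have "l \<le> d" if "l \<in> L" for l
  proof (rule ccontr)
    assume "\<not> l \<le> d"
    obtain y0 where y0: "y0 \<in> Y" "dQ Q y0 x = d"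
      using nearest_dQ_attained[OF assms, of x] unfolding d_def by blast
    have "{z. dQ Q z x < l} \<subseteq> homothet (Qstar Q) l x"
      using homothet_Qstar_eq[of l x] \<open>\<not> l \<le> d\<close> \<open>d \<ge> 0\<close> by auto
    moreover have "open {z. dQ Q z x < l}" by (rule open_Collect_less[OF continuous_on_dQ_left]) simp
    ultimately have "{z. dQ Q z x < l} \<subseteq> interior (homothet (Qstar Q) l x)"
      by (rule interior_maximal)
    then have "y0 \<in> interior (homothet (Qstar Q) l x)" using y0 \<open>\<not> l \<le> d\<close> by auto
    then show False using that y0 by (auto simp: L_def)
  qed
  ultimately have "Sup L = d" by (rule cSup_eq_maximum)
  then have "Qstar_at Q Y x = homothet (Qstar Q) d x" by (simp add: Qstar_at_def L_def)
  also have "\<dots> = {z. dQ Q z x \<le> d}" by (rule homothet_Qstar_eq[OF \<open>d \<ge> 0\<close>])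
  finally show ?thesis by (simp add: d_def)
qed

lemma conflicts_iff:
  "finite Y \<Longrightarrow> Y \<noteq> {} \<Longrightarrow> conflicts Q Y p x \<longleftrightarrow> dQ Q p x \<le> nearest_dQ Y x"
  by (simp add: conflicts_def Qstar_at_eq)

lemma conflict_point_on_open_segment:
  assumes "finite S" "S \<noteq> {}" "p \<notin> S" and far: "nearest_dQ S x < dQ Q p x"
  obtains t where "0 < t" "t < 1"
    "dQ Q p (p + t *\<^sub>R (x - p)) = nearest_dQ S (p + t *\<^sub>R (x - p))"
proof -
  define y where "y t = p + t *\<^sub>R (x - p)" for t :: real
  define g where "g t = dQ Q p (y t) - nearest_dQ S (y t)" for t
  have "continuous_on {0..1} (\<lambda>t. dQ Q p (y t))"
    unfolding y_def by (rule continuous_on_compose2[OF continuous_on_dQ_right[of UNIV p]])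
      (auto intro!: continuous_intros)
  moreover have "continuous_on {0..1} (\<lambda>t. nearest_dQ S (y t))"
    unfolding y_def by (rule continuous_on_compose2[OF continuous_on_nearest_dQ[OF assms(1,2), of UNIV]])
      (auto intro!: continuous_intros)
  ultimately have "continuous_on {0..1} g" unfolding g_def by (intro continuous_intros)
  obtain s where s: "s \<in> S" "dQ Q s p = nearest_dQ S p"
    using nearest_dQ_attained[OF assms(1,2)] by blast
  have "s \<noteq> p" using s(1) assms(3) by auto
  then have "nearest_dQ S p > 0" using s(2) dQ_eq_0_iff[of s p] dQ_nonneg[of s p] by simp
  then have "g 0 \<le> 0" using dQ_eq_0_iff[of p p] by (simp add: g_def y_def)
  moreover have "0 \<le> g 1" using far by (simp add: g_def y_def)
  ultimately obtain t where t: "0 \<le> t" "t \<le> 1" "g t = 0"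
    using IVT'[of g 0 0 1] \<open>continuous_on {0..1} g\<close> by auto
  have gt: "g t = t * dQ Q p x - nearest_dQ S (y t)" using t by (simp add: g_def y_def dQ_along_ray)
  have "t \<noteq> 0" using t gt \<open>nearest_dQ S p > 0\<close> by (auto simp: y_def)
  moreover have "t \<noteq> 1" using t gt far by (auto simp: y_def)
  ultimately show ?thesis using that[of t] t by (simp add: g_def y_def)
qed

lemma conflict_persists_in_superset:
  assumes "finite S" "R \<subseteq> S" "R \<noteq> {}" "p \<notin> S"
    and R_covers: "\<forall>q\<in>S. conflicts_set Q S p (vcell Q S q) \<longrightarrow> q \<in> R"
    and no_parallel: "\<forall>q\<in>R. \<forall>F\<in>sides Q. \<not> parallel_to (q - p) F"
    and conflict_R: "dQ Q p x \<le> nearest_dQ R x"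
  shows "dQ Q p x \<le> nearest_dQ S x"
proof (rule ccontr)
  assume far: "\<not> dQ Q p x \<le> nearest_dQ S x"
  have "S \<noteq> {}" using assms(2,3) by blast
  have "nearest_dQ S x < dQ Q p x" using far by simp
  then obtain t where t: "0 < t" "t < 1"
    and at_y: "dQ Q p (p + t *\<^sub>R (x - p)) = nearest_dQ S (p + t *\<^sub>R (x - p))"
    by (rule conflict_point_on_open_segment[OF assms(1) \<open>S \<noteq> {}\<close> assms(4)])
  define y where "y = p + t *\<^sub>R (x - p)"
  obtain s where s: "s \<in> S" "dQ Q s y = nearest_dQ S y"
    using nearest_dQ_attained[OF assms(1) \<open>S \<noteq> {}\<close>] by blast
  have "y \<in> vcell Q S s" using mem_vcell_iff[OF assms(1) \<open>S \<noteq> {}\<close>] s by simp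
  moreover have "conflicts Q S p y"
    using conflicts_iff[OF assms(1) \<open>S \<noteq> {}\<close>] at_y by (simp add: y_def)
  ultimately have "s \<in> R" using R_covers s(1) by (auto simp: conflicts_set_def)
  have "0 < dQ Q p x" using far nearest_dQ_nonneg[OF assms(1) \<open>S \<noteq> {}\<close>, of x] by linarith
  moreover have "s \<noteq> p" using s(1) assms(4) by auto
  moreover have "dQ Q s y = t * dQ Q p x"
    using s(2) at_y dQ_along_ray[of t p x] t(1) by (simp add: y_def)
  moreover have "dQ Q p x \<le> dQ Q s x"
    using conflict_R nearest_dQ_le[OF finite_subset[OF assms(2,1)] \<open>s \<in> R\<close>, of x] by linarith
  ultimately obtain F where "F \<in> sides Q" "parallel_to (s - p) F"
    using side_parallel_if_tight_on_segment[OF t, of p x s] unfolding y_def by blast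
  then show False using no_parallel \<open>s \<in> R\<close> by blast
qed

lemma sites_outside_farther:
  assumes "finite S" "R \<subseteq> S" "R \<noteq> {}" "p \<notin> S"
    and R_covers: "\<forall>q\<in>S. conflicts_set Q S p (vcell Q S q) \<longrightarrow> q \<in> R"
    and "\<forall>q\<in>R. \<forall>F\<in>sides Q. \<not> parallel_to (q - p) F"
    and "conflicts Q R p x"
  shows "\<forall>s\<in>S - R. nearest_dQ R x < dQ Q s x"
proof
  have "finite R" using assms(1,2) finite_subset by blast
  have "S \<noteq> {}" using assms(2,3) by blast
  have "dQ Q p x \<le> nearest_dQ R x" using assms(7) conflicts_iff[OF \<open>finite R\<close> assms(3)] by simp
  then have "conflicts Q S p x"
    using conflict_persists_in_superset[OF assms(1-6)] conflicts_iff[OF assms(1) \<open>S \<noteq> {}\<close>] by simp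
  obtain s1 where s1: "s1 \<in> S" "dQ Q s1 x = nearest_dQ S x"
    using nearest_dQ_attained[OF assms(1) \<open>S \<noteq> {}\<close>] by blast
  then have "x \<in> vcell Q S s1" using mem_vcell_iff[OF assms(1) \<open>S \<noteq> {}\<close>] by simp
  then have "s1 \<in> R" using R_covers \<open>conflicts Q S p x\<close> s1(1) by (auto simp: conflicts_set_def)
  then have nearest_le: "nearest_dQ R x \<le> nearest_dQ S x"
    using nearest_dQ_le[OF \<open>finite R\<close>] s1(2) by metis
  fix s assume s: "s \<in> S - R"
  show "nearest_dQ R x < dQ Q s x"
  proof (rule ccontr)
    assume "\<not> nearest_dQ R x < dQ Q s x"
    then have "x \<in> vcell Q S s" using mem_vcell_iff[OF assms(1) \<open>S \<noteq> {}\<close>] nearest_le by simp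
    then have "s \<in> R" using R_covers s \<open>conflicts Q S p x\<close> by (auto simp: conflicts_set_def)
    then show False using s by simp
  qed
qed

lemma nearest_dQ_eq_if_outside_farther:
  assumes "finite S" "R \<subseteq> S" "R \<noteq> {}" and farther: "\<forall>s\<in>S - R. nearest_dQ R y < dQ Q s y"
  shows "nearest_dQ S y = nearest_dQ R y"
proof -
  have "finite R" using assms(1,2) finite_subset by blast
  obtain r where r: "r \<in> R" "dQ Q r y = nearest_dQ R y"
    using nearest_dQ_attained[OF \<open>finite R\<close> assms(3)] by blast
  obtain s where s: "s \<in> S" "dQ Q s y = nearest_dQ S y"
    using nearest_dQ_attained[OF assms(1)] assms(2,3) by blast
  have "nearest_dQ S y \<le> nearest_dQ R y" using nearest_dQ_le[OF assms(1)] r assms(2) by (metis subsetD)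
  then have "s \<in> R" using farther s by force
  then have "nearest_dQ R y \<le> nearest_dQ S y" using nearest_dQ_le[OF \<open>finite R\<close>] s(2) by metis
  with \<open>nearest_dQ S y \<le> nearest_dQ R y\<close> show ?thesis by simp
qed

lemma vor_features_if_outside_farther:
  assumes "finite S" "R \<subseteq> S" "R \<noteq> {}" and farther: "\<forall>s\<in>S - R. nearest_dQ R x < dQ Q s x"
    and "x \<in> vor_features Q R"
  shows "x \<in> vor_features Q S"
proof -
  have "finite R" using assms(1,2) finite_subset by blast
  have "S \<noteq> {}" using assms(2,3) by blast
  define U where "U = (\<Inter>s\<in>S - R. {y. nearest_dQ R y < dQ Q s y})"
  have "open U" unfolding U_def using assms(1)
    by (intro open_INT ballI open_Collect_less continuous_on_nearest_dQ[OF \<open>finite R\<close> assms(3)]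
        continuous_on_dQ_right) auto
  moreover have "x \<in> U" using farther by (auto simp: U_def)
  ultimately obtain e where "e > 0" "ball x e \<subseteq> U" using open_contains_ball by blast
  then have "nearest_dQ S y = nearest_dQ R y" if "y \<in> ball x e" for y
    using nearest_dQ_eq_if_outside_farther[OF assms(1-3)] that by (auto simp: U_def)
  then have cells: "vcell Q S q \<inter> ball x e = vcell Q R q \<inter> ball x e" for q
    using mem_vcell_iff[OF assms(1) \<open>S \<noteq> {}\<close>] mem_vcell_iff[OF \<open>finite R\<close> assms(3)] by auto
  have "nearest_dQ S x = nearest_dQ R x"
    by (rule nearest_dQ_eq_if_outside_farther[OF assms(1-3) farther])
  then have "x \<in> vcell Q S q \<longleftrightarrow> x \<in> vcell Q R q" for q
    using mem_vcell_iff[OF assms(1) \<open>S \<noteq> {}\<close>] mem_vcell_iff[OF \<open>finite R\<close> assms(3)] by simp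
  moreover have "x \<notin> vcell Q R s" if "s \<in> S - R" for s
    using farther that mem_vcell_iff[OF \<open>finite R\<close> assms(3)] by force
  ultimately have sites: "sites_at Q S x = sites_at Q R x"
    unfolding sites_at_def using assms(2) by blast
  show ?thesis by (rule vor_features_if_locally_eq[OF \<open>e > 0\<close> cells sites assms(5)])
qed

end

theorem mainTheorem6:
  fixes Q S I R :: "pt set"
  assumes "convex_polygon_shape Q"
    and "finite S" and "finite I" and "S \<inter> I = {}"
    and "general_position Q (S \<union> I)"
    and "R \<subseteq> S"
    and "\<forall>q\<in>S. (\<exists>p\<in>I. conflicts_set Q S p (vcell Q S q)) \<longrightarrow> q \<in> R"
  shows "{x \<in> vor_features Q R. \<exists>p\<in>I. conflicts Q R p x}
           \<subseteq> (\<Union>p\<in>I. {x \<in> vor_features Q S. conflicts Q S p x})"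
proof
  fix x assume "x \<in> {x \<in> vor_features Q R. \<exists>p\<in>I. conflicts Q R p x}"
  then obtain p where x: "x \<in> vor_features Q R" and "p \<in> I" and conflict: "conflicts Q R p x"
    by blast
  interpret convex_shape Q
    using assms(1) by unfold_locales
      (auto simp: convex_polygon_shape_def polytope_imp_convex polytope_imp_compact)
  have "R \<noteq> {}" using x by auto
  have "finite R" using assms(2,6) finite_subset by blast
  have "S \<noteq> {}" using \<open>R \<noteq> {}\<close> assms(6) by blast
  have "p \<notin> S" using \<open>p \<in> I\<close> assms(4) by blast
  have "\<forall>q\<in>R. \<forall>F\<in>sides Q. \<not> parallel_to (q - p) F"
  proof (intro ballI)
    fix q F assume "q \<in> R" "F \<in> sides Q"
    then have "q \<in> S \<union> I" "p \<in> S \<union> I" "p \<noteq> q" using assms(6) \<open>p \<in> I\<close> \<open>p \<notin> S\<close> by auto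
    then show "\<not> parallel_to (q - p) F"
      using assms(5) \<open>F \<in> sides Q\<close> unfolding general_position_def by blast
  qed
  then have farther: "\<forall>s\<in>S - R. nearest_dQ R x < dQ Q s x"
    using sites_outside_farther[OF assms(2,6) \<open>R \<noteq> {}\<close> \<open>p \<notin> S\<close> _ _ conflict] assms(7) \<open>p \<in> I\<close>
    by blast
  have "x \<in> vor_features Q S"
    by (rule vor_features_if_outside_farther[OF assms(2,6) \<open>R \<noteq> {}\<close> farther x])
  moreover have "conflicts Q S p x"
    using conflict nearest_dQ_eq_if_outside_farther[OF assms(2,6) \<open>R \<noteq> {}\<close> farther]
    by (simp add: conflicts_iff[OF \<open>finite R\<close> \<open>R \<noteq> {}\<close>] conflicts_iff[OF assms(2) \<open>S \<noteq> {}\<close>])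
  ultimately show "x \<in> (\<Union>p\<in>I. {x \<in> vor_features Q S. conflicts Q S p x})" using \<open>p \<in> I\<close> by blast
qed

end
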